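(* Let $\mathcal F$ be a symmetric conservative clone with carrier $A$. Then $\rhd_0=\rhd_1=\mathrm R_2(\mathcal F)\cap(A^2_2\times A^2_2)$, and one of the following five cases holds, where in each case the stated equivalence holds for both $i=0$ and $i=1$ and for all $\mathbf x,\mathbf y\in A^2_2$: (1) $\mathbf x\rhd_i\mathbf y$ always; (2) $\mathbf x\rhd_i\mathbf y\iff\mathrm t(\mathbf x,\mathbf y)=0$; (3) $\mathbf x\rhd_i\mathbf y\iff\mathrm t(\mathbf x,\mathbf y)\in\{0,1\}$; (4) $|A|=4$ and $\mathbf x\rhd_i\mathbf y\iff\mathrm t(\mathbf x,\mathbf y)\in\{0,1,2\}$; (5) $|A|=3$ and $\mathbf x\rhd_i\mathbf y\iff\mathrm t(\mathbf x,\mathbf y)\in\{0,01,10\}$.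
   Context: $\mathcal O(A)=\bigcup_{n<\omega}A^{A^n}$; $\mathcal F_{[2]}=\mathcal F\cap A^{A^2}$; $S_A$ the permutations of $A$. A clone with carrier $A$ is a subset of $\mathcal O(A)$ containing all projections and closed under composition; conservative if $f(\mathbf a)\in\mathrm{ran}\,\mathbf a$ (set of entries) for all members; symmetric if $f_\sigma(\mathbf a)=\sigma^{-1}(f(\sigma(\mathbf a)))$ is a member for each member $f$ and $\sigma\in S_A$. $A^2_2$ is the set of pairs $\mathbf a=a_0a_1$ with $a_0\ne a_1$. $\mathrm R_2(\mathcal F)$: $\mathbf a\,\mathrm R_2(\mathcal F)\,\mathbf b$ iff some $\sigma\in S_A$ has $f(\mathbf b)=\sigma(f(\mathbf a))$ for all $f\in\mathcal F_{[2]}$. For $i\in\{0,1\}$, $\rhd_i$ is the relation on $A^2_2$: $\mathbf a\rhd_i\mathbf b$ iff for every $f\in\mathcal F_{[2]}$, $f(\mathbf a)=a_i$ implies $f(\mathbf b)=b_i$. The type $\mathrm t(\mathbf a,\mathbf b)$ of $\mathbf a=a_0a_1,\mathbf b=b_0b_1\in A^2_2$ is: $0$ if $\mathbf a=\mathbf b$; $1$ if $a_0=b_1$ and $a_1=b_0$; the string $ij$ ($i,j\in\{0,1\}$) if $a_i=b_j$ and $a_{1-i}\ne b_{1-j}$; $2$ if $\{a_0,a_1\}\cap\{b_0,b_1\}=\emptyset$. *)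

theory Defs
  imports Main
begin

text \<open>Tuples in A^n are represented by lists of length n with entries in A.
  An n-ary operation on A (an element of A^(A^n)) is represented extensionally by a
  function on lists which maps A^n into A and is undefined everywhere else.\<close>

definition tuples :: "'a set \<Rightarrow> nat \<Rightarrow> 'a list set" where
  "tuples A n = {xs. length xs = n \<and> set xs \<subseteq> A}"

definition ops :: "'a set \<Rightarrow> nat \<Rightarrow> ('a list \<Rightarrow> 'a) set" where
  "ops A n = {f. (\<forall>xs \<in> tuples A n. f xs \<in> A) \<and> (\<forall>xs. xs \<notin> tuples A n \<longrightarrow> f xs = undefined)}"

definition allops :: "'a set \<Rightarrow> ('a list \<Rightarrow> 'a) set" where
  "allops A = (\<Union>n. ops A n)"

definition proj :: "'a set \<Rightarrow> nat \<Rightarrow> nat \<Rightarrow> 'a list \<Rightarrow> 'a" where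
  "proj A n i = (\<lambda>xs. if xs \<in> tuples A n then xs ! i else undefined)"

definition compose :: "'a set \<Rightarrow> nat \<Rightarrow> ('a list \<Rightarrow> 'a) \<Rightarrow> ('a list \<Rightarrow> 'a) list \<Rightarrow> 'a list \<Rightarrow> 'a" where
  "compose A m f gs = (\<lambda>xs. if xs \<in> tuples A m then f (map (\<lambda>g. g xs) gs) else undefined)"

definition clone :: "'a set \<Rightarrow> ('a list \<Rightarrow> 'a) set \<Rightarrow> bool" where
  "clone A F \<longleftrightarrow> F \<subseteq> allops A
     \<and> (\<forall>n i. i < n \<longrightarrow> proj A n i \<in> F)
     \<and> (\<forall>n m f gs. f \<in> F \<inter> ops A n \<longrightarrow> length gs = n \<longrightarrow> set gs \<subseteq> F \<inter> ops A m
            \<longrightarrow> compose A m f gs \<in> F)"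

definition conservative :: "'a set \<Rightarrow> ('a list \<Rightarrow> 'a) set \<Rightarrow> bool" where
  "conservative A F \<longleftrightarrow> (\<forall>n. \<forall>f \<in> F \<inter> ops A n. \<forall>xs \<in> tuples A n. f xs \<in> set xs)"

definition conj_op :: "'a set \<Rightarrow> nat \<Rightarrow> ('a \<Rightarrow> 'a) \<Rightarrow> ('a list \<Rightarrow> 'a) \<Rightarrow> 'a list \<Rightarrow> 'a" where
  "conj_op A n \<sigma> f = (\<lambda>xs. if xs \<in> tuples A n then inv_into A \<sigma> (f (map \<sigma> xs)) else undefined)"

definition symmetric :: "'a set \<Rightarrow> ('a list \<Rightarrow> 'a) set \<Rightarrow> bool" where
  "symmetric A F \<longleftrightarrow> (\<forall>n. \<forall>f \<in> F \<inter> ops A n. \<forall>\<sigma>. bij_betw \<sigma> A A \<longrightarrow> conj_op A n \<sigma> f \<in> F)"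

text \<open>Pairs a0a1 are represented as Isabelle pairs (a0, a1).\<close>
definition A22 :: "'a set \<Rightarrow> ('a \<times> 'a) set" where
  "A22 A = {(a0, a1). a0 \<in> A \<and> a1 \<in> A \<and> a0 \<noteq> a1}"

definition app2 :: "('a list \<Rightarrow> 'a) \<Rightarrow> 'a \<times> 'a \<Rightarrow> 'a" where
  "app2 f p = f [fst p, snd p]"

definition entry :: "nat \<Rightarrow> 'a \<times> 'a \<Rightarrow> 'a" where
  "entry i p = (if i = 0 then fst p else snd p)"

definition R2 :: "'a set \<Rightarrow> ('a list \<Rightarrow> 'a) set \<Rightarrow> (('a \<times> 'a) \<times> ('a \<times> 'a)) set" where
  "R2 A F = {(a, b). a \<in> A \<times> A \<and> b \<in> A \<times> A \<and>
     (\<exists>\<sigma>. bij_betw \<sigma> A A \<and> (\<forall>f \<in> F \<inter> ops A 2. app2 f b = \<sigma> (app2 f a)))}"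

definition rhd :: "'a set \<Rightarrow> ('a list \<Rightarrow> 'a) set \<Rightarrow> nat \<Rightarrow> (('a \<times> 'a) \<times> ('a \<times> 'a)) set" where
  "rhd A F i = {(a, b). a \<in> A22 A \<and> b \<in> A22 A \<and>
     (\<forall>f \<in> F \<inter> ops A 2. app2 f a = entry i a \<longrightarrow> app2 f b = entry i b)}"

datatype ptype = T0 | T1 | T00 | T01 | T10 | T11 | T2

definition ptyp :: "'a \<times> 'a \<Rightarrow> 'a \<times> 'a \<Rightarrow> ptype" where
  "ptyp a b = (let (a0, a1) = a; (b0, b1) = b in
     if a = b then T0
     else if a0 = b1 \<and> a1 = b0 then T1
     else if a0 = b0 \<and> a1 \<noteq> b1 then T00
     else if a0 = b1 \<and> a1 \<noteq> b0 then T01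
     else if a1 = b0 \<and> a0 \<noteq> b1 then T10
     else if a1 = b1 \<and> a0 \<noteq> b0 then T11
     else if {a0, a1} \<inter> {b0, b1} = {} then T2
     else undefined)"

end

theory Submission
  imports Defs "HOL-Combinatorics.Permutations"
begin

text \<open>
  The relation rhd A F 0 is a preorder on the pairs of distinct elements. Symmetry of the
  clone makes it invariant under permutations of A, so it is a union of classes of pairs
  of a given type; conservativity makes rhd A F 1 its converse, and composing with the
  argument flip shows that it is closed under (a, b), (c, d) \<mapsto> (d, c), (b, a). These
  properties alone pin down the set of realised types: two T01-steps compose to a T10-step
  (so the preorder is symmetric), a type T00 or T11 connects everything, a type T01 or T10
  without T00 leaves room for only three elements, and a type T2 without T00 leaves room for
  only four elements and yields T1 by composing two T2-steps. Finally R2 agrees with rhd A F 0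
  because a permutation carrying (a, b) to (c, d) carries the conservative values f [a, b]
  to f [c, d].
\<close>

lemma proj_in_ops: "i < n \<Longrightarrow> proj A n i \<in> ops A n"
  by (auto simp: ops_def proj_def tuples_def)

lemma compose_in_ops:
  assumes "f \<in> ops A n" "length gs = n" "set gs \<subseteq> ops A m"
  shows "Defs.compose A m f gs \<in> ops A m"
proof -
  have "map (\<lambda>g. g xs) gs \<in> tuples A n" if "xs \<in> tuples A m" for xs
    using assms(2,3) that by (auto simp: tuples_def ops_def)
  then show ?thesis using assms(1) by (auto simp: ops_def Defs.compose_def)
qed

lemma conj_op_in_ops:
  assumes "bij_betw \<sigma> A A" "f \<in> ops A n"
  shows "conj_op A n \<sigma> f \<in> ops A n"
proof -
  have "map \<sigma> xs \<in> tuples A n" if "xs \<in> tuples A n" for xs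
    using assms(1) that by (auto simp: tuples_def bij_betw_def)
  then have "f (map \<sigma> xs) \<in> \<sigma> ` A" if "xs \<in> tuples A n" for xs
    using assms that by (auto simp: ops_def bij_betw_def)
  then show ?thesis by (auto simp: ops_def conj_op_def inv_into_into)
qed

lemma tuples_2_iff [simp]: "[a, b] \<in> tuples A 2 \<longleftrightarrow> a \<in> A \<and> b \<in> A"
  by (auto simp: tuples_def numeral_2_eq_2)

lemma ops_2_closed: "f \<in> ops A 2 \<Longrightarrow> a \<in> A \<Longrightarrow> b \<in> A \<Longrightarrow> f [a, b] \<in> A"
  by (simp add: ops_def)

lemma clone_proj: "clone A F \<Longrightarrow> i < n \<Longrightarrow> proj A n i \<in> F \<inter> ops A n"
  by (simp add: clone_def proj_in_ops)

lemma clone_flip: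
  assumes "clone A F" "f \<in> F \<inter> ops A 2"
  obtains g where "g \<in> F \<inter> ops A 2" "\<And>a b. a \<in> A \<Longrightarrow> b \<in> A \<Longrightarrow> g [a, b] = f [b, a]"
proof
  let ?g = "Defs.compose A 2 f [proj A 2 1, proj A 2 0]"
  have projs: "set [proj A 2 1, proj A 2 0] \<subseteq> F \<inter> ops A 2"
    using clone_proj[OF assms(1)] by simp
  show "?g \<in> F \<inter> ops A 2"
    using assms projs compose_in_ops[of f A 2 "[proj A 2 1, proj A 2 0]" 2]
    unfolding clone_def by (auto simp del: One_nat_def)
  show "?g [a, b] = f [b, a]" if "a \<in> A" "b \<in> A" for a b
    using that by (simp add: Defs.compose_def proj_def)
qed

lemma symmetric_conj:
  assumes "symmetric A F" "bij_betw \<sigma> A A" "f \<in> F \<inter> ops A n"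
  shows "conj_op A n \<sigma> f \<in> F \<inter> ops A n"
  using assms conj_op_in_ops unfolding symmetric_def by blast

lemma conservative_binary:
  assumes "conservative A F" "f \<in> F \<inter> ops A 2" "a \<in> A" "b \<in> A"
  shows "f [a, b] = a \<or> f [a, b] = b"
  using assms unfolding conservative_def by (metis tuples_2_iff empty_iff empty_set insert_iff list.simps(15))

section \<open>Extending a matching of lists to a permutation\<close>

text \<open>The last hypothesis says that xs and ys have the same pattern of equal entries.\<close>

lemma exists_permutes_map_eq:
  assumes "length xs = length ys" "set xs \<subseteq> A" "set ys \<subseteq> A"
    and "\<And>x y x' y'. (x, y) \<in> set (zip xs ys) \<Longrightarrow> (x', y') \<in> set (zip xs ys) \<Longrightarrow> x = x' \<longleftrightarrow> y = y'"
  shows "\<exists>\<sigma>. \<sigma> permutes A \<and> map \<sigma> xs = ys"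
  using assms
proof (induction xs arbitrary: ys)
  case Nil
  then have "ys = []" by simp
  then show ?case by (intro exI[of _ id] conjI permutes_id) simp
next
  case (Cons x xs)
  obtain y ys' where ys: "ys = y # ys'" using Cons.prems(1) by (cases ys) auto
  have pattern: "u = u' \<longleftrightarrow> v = v'"
    if "(u, v) \<in> insert (x, y) (set (zip xs ys'))" "(u', v') \<in> insert (x, y) (set (zip xs ys'))"
    for u v u' v'
    using that by (intro Cons.prems(4)) (simp_all add: ys)
  have "\<exists>\<sigma>. \<sigma> permutes A \<and> map \<sigma> xs = ys'"
  proof (rule Cons.IH)
    fix u v u' v' assume "(u, v) \<in> set (zip xs ys')" "(u', v') \<in> set (zip xs ys')"
    then show "u = u' \<longleftrightarrow> v = v'" by (intro pattern) simp_all
  qed (use Cons.prems(1-3) ys in auto)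
  then obtain \<sigma> where \<sigma>: "\<sigma> permutes A" "map \<sigma> xs = ys'" by blast
  show ?case
  proof (cases "x \<in> set xs")
    case True
    then obtain k where k: "k < length xs" "xs ! k = x" by (auto simp: in_set_conv_nth)
    have "(x, ys' ! k) \<in> set (zip xs ys')"
      using k Cons.prems(1) ys by (auto simp: set_zip)
    then have "ys' ! k = y" using pattern[of x y x "ys' ! k"] by simp
    then have "\<sigma> x = y" using k \<sigma>(2) by (metis nth_map)
    then show ?thesis using \<sigma> ys by auto
  next
    case False
    have "y \<notin> set ys'"
    proof
      assume "y \<in> set ys'"
      then obtain x' where "(x', y) \<in> set (zip xs ys')"
        using Cons.prems(1) ys by (metis in_set_impl_in_set_zip2 length_Cons nat.inject)
      then show False using False pattern[of x y x' y] by (auto dest: set_zip_leftD)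
    qed
    moreover have "\<sigma> x \<notin> set ys'"
      using False \<sigma> by (auto simp: inj_image_mem_iff permutes_inj)
    ultimately have "map (Transposition.transpose (\<sigma> x) y) ys' = ys'"
      by (intro map_idI transpose_apply_other) auto
    then have "map (Transposition.transpose (\<sigma> x) y \<circ> \<sigma>) (x # xs) = ys"
      using \<sigma>(2) ys by (simp del: map_map add: map_map[symmetric])
    moreover have "Transposition.transpose (\<sigma> x) y \<circ> \<sigma> permutes A"
      using Cons.prems(2,3) ys \<sigma>(1) by (simp add: permutes_compose permutes_swap_id permutes_in_image)
    ultimately show ?thesis by blast
  qed
qed

lemma A22_iff [simp]: "(a, b) \<in> A22 A \<longleftrightarrow> a \<in> A \<and> b \<in> A \<and> a \<noteq> b"
  by (simp add: A22_def)

lemma ptyp_Pair: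
  assumes "a \<noteq> b" "c \<noteq> d"
  shows "ptyp (a, b) (c, d) =
    (if a = c then if b = d then T0 else T00
     else if a = d then if b = c then T1 else T01
     else if b = c then T10 else if b = d then T11 else T2)"
  using assms by (simp add: ptyp_def)

lemma UNIV_ptype: "(UNIV :: ptype set) = {T0, T1, T00, T01, T10, T11, T2}"
  using ptype.exhaust by auto

lemma ptyp_converse:
  assumes "x \<in> A22 A" "y \<in> A22 A"
  shows "ptyp y x = (case ptyp x y of T01 \<Rightarrow> T10 | T10 \<Rightarrow> T01 | t \<Rightarrow> t)"
proof -
  obtain a b c d where "x = (a, b)" "y = (c, d)" "a \<noteq> b" "c \<noteq> d"
    using assms by (cases x, cases y) auto
  then show ?thesis by (simp add: ptyp_Pair)
qed

lemma ptyp_reverse: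
  assumes "x \<in> A22 A" "y \<in> A22 A"
  shows "ptyp (prod.swap y) (prod.swap x) = (case ptyp x y of T00 \<Rightarrow> T11 | T11 \<Rightarrow> T00 | t \<Rightarrow> t)"
proof -
  obtain a b c d where "x = (a, b)" "y = (c, d)" "a \<noteq> b" "c \<noteq> d"
    using assms by (cases x, cases y) auto
  then show ?thesis by (auto simp: ptyp_Pair)
qed

lemma ptyp_eq_imp_permutes:
  assumes "x \<in> A22 A" "y \<in> A22 A" "x' \<in> A22 A" "y' \<in> A22 A" and "ptyp x' y' = ptyp x y"
  shows "\<exists>\<sigma>. \<sigma> permutes A \<and> map_prod \<sigma> \<sigma> x = x' \<and> map_prod \<sigma> \<sigma> y = y'"
proof -
  obtain a b c d a' b' c' d' where
    xy: "x = (a, b)" "y = (c, d)" "x' = (a', b')" "y' = (c', d')"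
    by (cases x, cases y, cases x', cases y') auto
  have dist: "a \<noteq> b" "c \<noteq> d" "a' \<noteq> b'" "c' \<noteq> d'" using assms(1-4) xy by (auto simp: A22_def)
  have "(a = c \<longleftrightarrow> a' = c') \<and> (a = d \<longleftrightarrow> a' = d') \<and> (b = c \<longleftrightarrow> b' = c') \<and> (b = d \<longleftrightarrow> b' = d')"
    using assms(5) dist unfolding xy by (auto simp: ptyp_Pair split: if_splits)
  then have "\<exists>\<sigma>. \<sigma> permutes A \<and> map \<sigma> [a, b, c, d] = [a', b', c', d']"
    using assms(1-4) dist xy by (intro exists_permutes_map_eq) (auto simp: A22_def)
  then show ?thesis using xy by auto
qed

section \<open>Type-closed preorders on pairs\<close>

locale typed_pair_preorder =
  fixes A :: "'a set" and R :: "(('a \<times> 'a) \<times> ('a \<times> 'a)) set"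
  assumes subset: "R \<subseteq> A22 A \<times> A22 A"
    and reflexive: "x \<in> A22 A \<Longrightarrow> (x, x) \<in> R"
    and transitive: "(x, y) \<in> R \<Longrightarrow> (y, z) \<in> R \<Longrightarrow> (x, z) \<in> R"
    and type_closed: "(x, y) \<in> R \<Longrightarrow> x' \<in> A22 A \<Longrightarrow> y' \<in> A22 A \<Longrightarrow> ptyp x' y' = ptyp x y
      \<Longrightarrow> (x', y') \<in> R"
    and reverse_closed: "(x, y) \<in> R \<Longrightarrow> (prod.swap y, prod.swap x) \<in> R"
begin

definition types :: "ptype set" where
  "types = (\<lambda>(x, y). ptyp x y) ` R"

lemma ptyp_in_types: "(x, y) \<in> R \<Longrightarrow> ptyp x y \<in> types"
  by (force simp: types_def)

lemma mem_if_type: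
  "t \<in> types \<Longrightarrow> ptyp x y = t \<Longrightarrow> x \<in> A22 A \<Longrightarrow> y \<in> A22 A \<Longrightarrow> (x, y) \<in> R"
  by (auto simp: types_def intro: type_closed)

lemma types_witness:
  assumes "t \<in> types"
  obtains a b c d where "((a, b), (c, d)) \<in> R" "ptyp (a, b) (c, d) = t"
    "a \<in> A" "b \<in> A" "a \<noteq> b" "c \<in> A" "d \<in> A" "c \<noteq> d"
  using assms subset by (force simp: types_def)

text \<open>T0 is realised only if A22 A is nonempty, hence the insert.\<close>

lemma mem_iff_ptyp_in:
  assumes "types \<subseteq> S" "S \<subseteq> insert T0 types"
  shows "\<forall>x\<in>A22 A. \<forall>y\<in>A22 A. (x, y) \<in> R \<longleftrightarrow> ptyp x y \<in> S"
proof (intro ballI)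
  fix x y assume xy: "x \<in> A22 A" "y \<in> A22 A"
  obtain a b c d where "x = (a, b)" "y = (c, d)" "a \<noteq> b" "c \<noteq> d"
    using xy by (cases x, cases y) auto
  then have "x = y" if "ptyp x y = T0"
    using that by (auto simp: ptyp_Pair split: if_splits)
  then show "(x, y) \<in> R \<longleftrightarrow> ptyp x y \<in> S"
    using assms xy reflexive ptyp_in_types mem_if_type by blast
qed

lemma T00_witness:
  assumes "T00 \<in> types"
  obtains a b c where "((a, b), (a, c)) \<in> R" "a \<in> A" "b \<in> A" "c \<in> A" "a \<noteq> b" "a \<noteq> c" "b \<noteq> c"
proof -
  obtain a b c d where w: "((a, b), (c, d)) \<in> R" "ptyp (a, b) (c, d) = T00"
    "a \<in> A" "b \<in> A" "a \<noteq> b" "c \<in> A" "d \<in> A" "c \<noteq> d"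
    using assms by (rule types_witness)
  then have "a = c" "b \<noteq> d" by (simp_all add: ptyp_Pair split: if_splits)
  then show thesis using that w by blast
qed

lemma T01_witness:
  assumes "T01 \<in> types"
  obtains a b c where "((a, b), (c, a)) \<in> R" "a \<in> A" "b \<in> A" "c \<in> A" "a \<noteq> b" "a \<noteq> c" "b \<noteq> c"
proof -
  obtain a b c d where w: "((a, b), (c, d)) \<in> R" "ptyp (a, b) (c, d) = T01"
    "a \<in> A" "b \<in> A" "a \<noteq> b" "c \<in> A" "d \<in> A" "c \<noteq> d"
    using assms by (rule types_witness)
  then have "a = d" "b \<noteq> c" by (simp_all add: ptyp_Pair split: if_splits)
  then show thesis using that w by blast
qed

lemma T10_witness:
  assumes "T10 \<in> types"
  obtains a b c where "((a, b), (b, c)) \<in> R" "a \<in> A" "b \<in> A" "c \<in> A" "a \<noteq> b" "a \<noteq> c" "b \<noteq> c"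
proof -
  obtain a b c d where w: "((a, b), (c, d)) \<in> R" "ptyp (a, b) (c, d) = T10"
    "a \<in> A" "b \<in> A" "a \<noteq> b" "c \<in> A" "d \<in> A" "c \<noteq> d"
    using assms by (rule types_witness)
  then have "b = c" "a \<noteq> d" by (simp_all add: ptyp_Pair split: if_splits)
  then show thesis using that w by blast
qed

lemma T2_witness:
  assumes "T2 \<in> types"
  obtains a b c d where "((a, b), (c, d)) \<in> R" "a \<in> A" "b \<in> A" "c \<in> A" "d \<in> A"
    "a \<noteq> b" "a \<noteq> c" "a \<noteq> d" "b \<noteq> c" "b \<noteq> d" "c \<noteq> d"
proof -
  obtain a b c d where w: "((a, b), (c, d)) \<in> R" "ptyp (a, b) (c, d) = T2"
    "a \<in> A" "b \<in> A" "a \<noteq> b" "c \<in> A" "d \<in> A" "c \<noteq> d"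
    using assms by (rule types_witness)
  then have "a \<noteq> c" "a \<noteq> d" "b \<noteq> c" "b \<noteq> d" by (simp_all add: ptyp_Pair split: if_splits)
  then show thesis using that w by blast
qed

lemma T01_in_types_iff_T10: "T01 \<in> types \<longleftrightarrow> T10 \<in> types"
proof
  assume "T01 \<in> types"
  then obtain a b c where abc: "a \<in> A" "b \<in> A" "c \<in> A" "a \<noteq> b" "a \<noteq> c" "b \<noteq> c"
    by (rule T01_witness)
  have "((c, a), (b, c)) \<in> R" "((b, c), (a, b)) \<in> R"
    using abc by (auto intro!: mem_if_type[OF \<open>T01 \<in> types\<close>] simp: ptyp_Pair)
  then have "((c, a), (a, b)) \<in> R" by (rule transitive)
  then show "T10 \<in> types" using abc ptyp_in_types by (force simp: ptyp_Pair)
next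
  assume "T10 \<in> types"
  then obtain a b d where abd: "a \<in> A" "b \<in> A" "d \<in> A" "a \<noteq> b" "a \<noteq> d" "b \<noteq> d"
    by (rule T10_witness)
  have "((b, d), (d, a)) \<in> R" "((d, a), (a, b)) \<in> R"
    using abd by (auto intro!: mem_if_type[OF \<open>T10 \<in> types\<close>] simp: ptyp_Pair)
  then have "((b, d), (a, b)) \<in> R" by (rule transitive)
  then show "T01 \<in> types" using abd ptyp_in_types by (force simp: ptyp_Pair)
qed

lemma T00_in_types_iff_T11: "T00 \<in> types \<longleftrightarrow> T11 \<in> types"
proof -
  have "(case t of T00 \<Rightarrow> T11 | T11 \<Rightarrow> T00 | t \<Rightarrow> t) \<in> types" if t: "t \<in> types" for t
  proof -
    obtain a b c d where w: "((a, b), (c, d)) \<in> R" "ptyp (a, b) (c, d) = t"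
      "a \<in> A" "b \<in> A" "a \<noteq> b" "c \<in> A" "d \<in> A" "c \<noteq> d"
      using t by (rule types_witness)
    then show ?thesis
      using ptyp_in_types[OF reverse_closed[OF w(1)]] ptyp_reverse[of "(a, b)" A "(c, d)"] by simp
  qed
  from this[of T00] this[of T11] show ?thesis by auto
qed

lemma sym:
  assumes "(x, y) \<in> R"
  shows "(y, x) \<in> R"
proof -
  have xy: "x \<in> A22 A" "y \<in> A22 A" using assms subset by auto
  have "ptyp y x \<in> types"
    using ptyp_in_types[OF assms] T01_in_types_iff_T10 unfolding ptyp_converse[OF xy]
    by (cases "ptyp x y") auto
  then show ?thesis by (rule mem_if_type[OF _ HOL.refl xy(2,1)])
qed

lemma total_if_T00:
  assumes "T00 \<in> types" "x \<in> A22 A" "y \<in> A22 A"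
  shows "(x, y) \<in> R"
proof -
  have "T11 \<in> types" using assms(1) T00_in_types_iff_T11 by simp
  have same_fst: "((a, b), (a, d)) \<in> R" if "a \<in> A" "b \<in> A" "d \<in> A" "a \<noteq> b" "a \<noteq> d" for a b d
    using that reflexive by (cases "b = d") (auto intro!: mem_if_type[OF assms(1)] simp: ptyp_Pair)
  have same_snd: "((a, d), (c, d)) \<in> R" if "a \<in> A" "c \<in> A" "d \<in> A" "a \<noteq> d" "c \<noteq> d" for a c d
    using that reflexive by (cases "a = c") (auto intro!: mem_if_type[OF \<open>T11 \<in> types\<close>] simp: ptyp_Pair)
  obtain a b c d where xy: "x = (a, b)" "y = (c, d)" "a \<in> A" "b \<in> A" "c \<in> A" "d \<in> A"
    "a \<noteq> b" "c \<noteq> d"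
    using assms(2,3) by (cases x, cases y) auto
  show ?thesis
  proof (cases "a = d")
    case True
    obtain p q r where "p \<in> A" "q \<in> A" "r \<in> A" "p \<noteq> q" "p \<noteq> r" "q \<noteq> r"
      using assms(1) by (rule T00_witness)
    then obtain e where e: "e \<in> A" "e \<noteq> a" "e \<noteq> c" by blast
    have "((a, b), (a, e)) \<in> R" "((a, e), (c, e)) \<in> R" "((c, e), (c, a)) \<in> R"
      using xy True e same_fst same_snd by auto
    then show ?thesis using xy True transitive by blast
  next
    case False
    then have "((a, b), (a, d)) \<in> R" "((a, d), (c, d)) \<in> R"
      using xy same_fst same_snd by auto
    then show ?thesis using xy transitive by blast
  qed
qed

lemma card_eq_3_if_T01:
  assumes "T01 \<in> types" "T00 \<notin> types"
  shows "card A = 3"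
proof -
  obtain p q r where pqr: "p \<in> A" "q \<in> A" "r \<in> A" "p \<noteq> q" "p \<noteq> r" "q \<noteq> r"
    using assms(1) by (rule T01_witness)
  have "e \<in> {p, q, r}" if "e \<in> A" for e
  proof (rule ccontr)
    assume e: "e \<notin> {p, q, r}"
    then have "((p, q), (r, p)) \<in> R" "((r, p), (e, r)) \<in> R" "((e, r), (p, e)) \<in> R"
      using pqr that by (auto intro!: mem_if_type[OF assms(1)] simp: ptyp_Pair)
    then have "((p, q), (p, e)) \<in> R" using transitive by blast
    then have "T00 \<in> types" using ptyp_in_types pqr e by (force simp: ptyp_Pair)
    then show False using assms(2) by simp
  qed
  then have "A = {p, q, r}" using pqr by auto
  then show ?thesis using pqr by simp
qed

lemma T1_notin_types_if_T01:
  assumes "T01 \<in> types" "T11 \<notin> types"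
  shows "T1 \<notin> types"
proof
  assume "T1 \<in> types"
  obtain p q r where pqr: "p \<in> A" "q \<in> A" "r \<in> A" "p \<noteq> q" "p \<noteq> r" "q \<noteq> r"
    using assms(1) by (rule T01_witness)
  have "((p, q), (q, p)) \<in> R"
    using pqr by (auto intro!: mem_if_type[OF \<open>T1 \<in> types\<close>] simp: ptyp_Pair)
  moreover have "((q, p), (r, q)) \<in> R"
    using pqr by (auto intro!: mem_if_type[OF assms(1)] simp: ptyp_Pair)
  ultimately have "((p, q), (r, q)) \<in> R" by (rule transitive)
  then have "T11 \<in> types" using ptyp_in_types pqr by (force simp: ptyp_Pair)
  then show False using assms(2) by simp
qed

lemma card_eq_4_if_T2:
  assumes "T2 \<in> types" "T00 \<notin> types"
  shows "card A = 4"
proof -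
  obtain p q r s where pqrs: "((p, q), (r, s)) \<in> R" "p \<in> A" "q \<in> A" "r \<in> A" "s \<in> A"
    "p \<noteq> q" "p \<noteq> r" "p \<noteq> s" "q \<noteq> r" "q \<noteq> s" "r \<noteq> s"
    using assms(1) by (rule T2_witness)
  have "e \<in> {p, q, r, s}" if "e \<in> A" for e
  proof (rule ccontr)
    assume e: "e \<notin> {p, q, r, s}"
    then have "((r, s), (p, e)) \<in> R"
      using pqrs that by (auto intro!: mem_if_type[OF assms(1)] simp: ptyp_Pair)
    then have "((p, q), (p, e)) \<in> R" using pqrs(1) transitive by blast
    then have "T00 \<in> types" using ptyp_in_types pqrs e by (force simp: ptyp_Pair)
    then show False using assms(2) by simp
  qed
  then have "A = {p, q, r, s}" using pqrs by auto
  then show ?thesis using pqrs by simp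
qed

lemma T1_in_types_if_T2:
  assumes "T2 \<in> types"
  shows "T1 \<in> types"
proof -
  obtain p q r s where pqrs: "((p, q), (r, s)) \<in> R" "p \<in> A" "q \<in> A" "r \<in> A" "s \<in> A"
    "p \<noteq> q" "p \<noteq> r" "p \<noteq> s" "q \<noteq> r" "q \<noteq> s" "r \<noteq> s"
    using assms by (rule T2_witness)
  have "((r, s), (q, p)) \<in> R"
    using pqrs by (auto intro!: mem_if_type[OF assms] simp: ptyp_Pair)
  then have "((p, q), (q, p)) \<in> R" using pqrs(1) transitive by blast
  then show ?thesis using ptyp_in_types pqrs by (force simp: ptyp_Pair)
qed

lemma T2_notin_types_if_card_3:
  assumes "card A = 3"
  shows "T2 \<notin> types"
proof
  assume "T2 \<in> types"
  then obtain a b c d where "a \<in> A" "b \<in> A" "c \<in> A" "d \<in> A"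
    "a \<noteq> b" "a \<noteq> c" "a \<noteq> d" "b \<noteq> c" "b \<noteq> d" "c \<noteq> d"
    by (rule T2_witness)
  moreover have "finite A" using assms by (intro card_ge_0_finite) simp
  ultimately have "card {a, b, c, d} \<le> card A" by (intro card_mono) auto
  then show False using assms \<open>a \<noteq> b\<close> \<open>a \<noteq> c\<close> \<open>a \<noteq> d\<close> \<open>b \<noteq> c\<close> \<open>b \<noteq> d\<close> \<open>c \<noteq> d\<close> by simp
qed

lemma classification:
  "(\<forall>x\<in>A22 A. \<forall>y\<in>A22 A. (x, y) \<in> R) \<or>
   (\<forall>x\<in>A22 A. \<forall>y\<in>A22 A. (x, y) \<in> R \<longleftrightarrow> ptyp x y = T0) \<or>
   (\<forall>x\<in>A22 A. \<forall>y\<in>A22 A. (x, y) \<in> R \<longleftrightarrow> ptyp x y \<in> {T0, T1}) \<or>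
   (card A = 4 \<and> (\<forall>x\<in>A22 A. \<forall>y\<in>A22 A. (x, y) \<in> R \<longleftrightarrow> ptyp x y \<in> {T0, T1, T2})) \<or>
   (card A = 3 \<and> (\<forall>x\<in>A22 A. \<forall>y\<in>A22 A. (x, y) \<in> R \<longleftrightarrow> ptyp x y \<in> {T0, T01, T10}))"
proof -
  consider (total) "T00 \<in> types"
    | (three) "T00 \<notin> types" "T11 \<notin> types" "T01 \<in> types" "T10 \<in> types"
    | (four) "T00 \<notin> types" "T11 \<notin> types" "T01 \<notin> types" "T10 \<notin> types" "T2 \<in> types"
    | (flip) "T00 \<notin> types" "T11 \<notin> types" "T01 \<notin> types" "T10 \<notin> types" "T2 \<notin> types"
        "T1 \<in> types"
    | (identity) "T00 \<notin> types" "T11 \<notin> types" "T01 \<notin> types" "T10 \<notin> types" "T2 \<notin> types"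
        "T1 \<notin> types"
    using T01_in_types_iff_T10 T00_in_types_iff_T11 by blast
  then show ?thesis
  proof cases
    case total
    then show ?thesis using total_if_T00 by blast
  next
    case three
    have "card A = 3" using \<open>T01 \<in> types\<close> \<open>T00 \<notin> types\<close> by (rule card_eq_3_if_T01)
    moreover have "T1 \<notin> types" using \<open>T01 \<in> types\<close> \<open>T11 \<notin> types\<close> by (rule T1_notin_types_if_T01)
    then have "types \<subseteq> {T0, T01, T10}"
      using three UNIV_ptype T2_notin_types_if_card_3[OF \<open>card A = 3\<close>] by blast
    ultimately show ?thesis using three mem_iff_ptyp_in[of "{T0, T01, T10}"] by blast
  next
    case four
    have "card A = 4" using \<open>T2 \<in> types\<close> \<open>T00 \<notin> types\<close> by (rule card_eq_4_if_T2)
    moreover have "types \<subseteq> {T0, T1, T2}" using four UNIV_ptype by blast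
    ultimately show ?thesis using four T1_in_types_if_T2 mem_iff_ptyp_in[of "{T0, T1, T2}"] by blast
  next
    case flip
    then have "types \<subseteq> {T0, T1}" using UNIV_ptype by blast
    then show ?thesis using flip mem_iff_ptyp_in[of "{T0, T1}"] by blast
  next
    case identity
    then have "types \<subseteq> {T0}" using UNIV_ptype by blast
    then have "\<forall>x\<in>A22 A. \<forall>y\<in>A22 A. (x, y) \<in> R \<longleftrightarrow> ptyp x y \<in> {T0}"
      by (rule mem_iff_ptyp_in) blast
    then show ?thesis by simp
  qed
qed

end

section \<open>The relations of a symmetric conservative clone\<close>

lemma mem_rhd_0_iff:
  "((a, b), (c, d)) \<in> rhd A F 0 \<longleftrightarrow> (a, b) \<in> A22 A \<and> (c, d) \<in> A22 A \<and>
     (\<forall>f \<in> F \<inter> ops A 2. f [a, b] = a \<longrightarrow> f [c, d] = c)"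
  by (simp add: rhd_def app2_def entry_def)

lemma rhd_1_eq_converse:
  assumes "conservative A F"
  shows "rhd A F 1 = (rhd A F 0)\<inverse>"
proof -
  have snd_iff: "f [u, v] = v \<longleftrightarrow> f [u, v] \<noteq> u" if "f \<in> F \<inter> ops A 2" "(u, v) \<in> A22 A" for f u v
    using conservative_binary[OF assms that(1)] that(2) by auto
  have "((a, b), (c, d)) \<in> rhd A F 1 \<longleftrightarrow> ((c, d), (a, b)) \<in> rhd A F 0" for a b c d
    by (auto simp: rhd_def app2_def entry_def snd_iff)
  then show ?thesis by auto
qed

lemma rhd_0_perm:
  assumes "symmetric A F" "bij_betw \<sigma> A A" "(x, y) \<in> rhd A F 0"
  shows "(map_prod \<sigma> \<sigma> x, map_prod \<sigma> \<sigma> y) \<in> rhd A F 0"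
proof -
  obtain a b c d where xy: "x = (a, b)" "y = (c, d)" by (cases x, cases y) auto
  have in_A: "a \<in> A" "b \<in> A" "a \<noteq> b" "c \<in> A" "d \<in> A" "c \<noteq> d"
    using assms(3) xy by (auto simp: mem_rhd_0_iff)
  have inj: "inj_on \<sigma> A" and onto: "\<sigma> ` A = A" using assms(2) by (auto simp: bij_betw_def)
  have "f [\<sigma> c, \<sigma> d] = \<sigma> c" if f: "f \<in> F \<inter> ops A 2" and "f [\<sigma> a, \<sigma> b] = \<sigma> a" for f
  proof -
    let ?g = "conj_op A 2 \<sigma> f"
    have "?g [a, b] = a" using in_A inj \<open>f [\<sigma> a, \<sigma> b] = \<sigma> a\<close> by (simp add: conj_op_def)
    then have "?g [c, d] = c"
      using assms(3) xy symmetric_conj[OF assms(1,2) f] by (auto simp: mem_rhd_0_iff)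
    then have "inv_into A \<sigma> (f [\<sigma> c, \<sigma> d]) = c" using in_A by (simp add: conj_op_def)
    moreover have "f [\<sigma> c, \<sigma> d] \<in> \<sigma> ` A" using f in_A onto by (auto intro: ops_2_closed)
    ultimately show ?thesis by (metis f_inv_into_f)
  qed
  moreover have "\<sigma> a \<noteq> \<sigma> b" "\<sigma> c \<noteq> \<sigma> d" using in_A inj by (auto dest: inj_onD)
  ultimately show ?thesis using xy in_A onto by (auto simp: mem_rhd_0_iff)
qed

lemma rhd_0_reverse:
  assumes "clone A F" "conservative A F" "(x, y) \<in> rhd A F 0"
  shows "(prod.swap y, prod.swap x) \<in> rhd A F 0"
proof -
  obtain a b c d where xy: "x = (a, b)" "y = (c, d)" by (cases x, cases y) auto
  have in_A: "a \<in> A" "b \<in> A" "a \<noteq> b" "c \<in> A" "d \<in> A" "c \<noteq> d"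
    using assms(3) xy by (auto simp: mem_rhd_0_iff)
  have "f [b, a] = b" if f: "f \<in> F \<inter> ops A 2" and "f [d, c] = d" for f
  proof (rule ccontr)
    assume "f [b, a] \<noteq> b"
    then have "f [b, a] = a" using conservative_binary[OF assms(2) f] in_A by blast
    obtain g where g: "g \<in> F \<inter> ops A 2" "\<And>u v. u \<in> A \<Longrightarrow> v \<in> A \<Longrightarrow> g [u, v] = f [v, u]"
      using clone_flip[OF assms(1) f] by blast
    have "g [a, b] = a" using g(2) in_A \<open>f [b, a] = a\<close> by simp
    then have "g [c, d] = c" using assms(3) xy g(1) by (auto simp: mem_rhd_0_iff)
    then show False using g(2) in_A \<open>f [d, c] = d\<close> by simp
  qed
  then show ?thesis using xy in_A by (auto simp: mem_rhd_0_iff)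
qed

lemma rhd_0_type_closed:
  assumes "symmetric A F" "(x, y) \<in> rhd A F 0" "x' \<in> A22 A" "y' \<in> A22 A" "ptyp x' y' = ptyp x y"
  shows "(x', y') \<in> rhd A F 0"
proof -
  have "x \<in> A22 A" "y \<in> A22 A" using assms(2) by (auto simp: rhd_def)
  then obtain \<sigma> where "\<sigma> permutes A" "map_prod \<sigma> \<sigma> x = x'" "map_prod \<sigma> \<sigma> y = y'"
    using ptyp_eq_imp_permutes assms(3-5) by metis
  then show ?thesis using rhd_0_perm[OF assms(1) _ assms(2)] permutes_imp_bij by metis
qed

lemma typed_pair_preorder_rhd_0:
  assumes "clone A F" "conservative A F" "symmetric A F"
  shows "typed_pair_preorder A (rhd A F 0)"
proof
  show "rhd A F 0 \<subseteq> A22 A \<times> A22 A" by (auto simp: rhd_def)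
  show "(x, x) \<in> rhd A F 0" if "x \<in> A22 A" for x using that by (simp add: rhd_def)
  show "(x, z) \<in> rhd A F 0" if "(x, y) \<in> rhd A F 0" "(y, z) \<in> rhd A F 0" for x y z
    using that by (simp add: rhd_def)
qed (use rhd_0_type_closed[OF assms(3)] rhd_0_reverse[OF assms(1,2)] in auto)

lemma R2_Int_A22_subset_rhd_0:
  assumes "clone A F"
  shows "R2 A F \<inter> (A22 A \<times> A22 A) \<subseteq> rhd A F 0"
proof
  fix z assume z: "z \<in> R2 A F \<inter> (A22 A \<times> A22 A)"
  obtain a b c d where abcd: "z = ((a, b), (c, d))" "(a, b) \<in> A22 A" "(c, d) \<in> A22 A"
    using z by (cases z) auto
  obtain \<sigma> where \<sigma>: "\<forall>f \<in> F \<inter> ops A 2. f [c, d] = \<sigma> (f [a, b])"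
    using z unfolding abcd(1) R2_def app2_def by auto
  have "proj A 2 0 [c, d] = \<sigma> (proj A 2 0 [a, b])"
    using \<sigma> clone_proj[OF assms, of 0 2] by simp
  then have "c = \<sigma> a" using abcd by (simp add: proj_def)
  have "f [c, d] = c" if f: "f \<in> F \<inter> ops A 2" and "f [a, b] = a" for f
  proof -
    have "f [c, d] = \<sigma> (f [a, b])" using \<sigma> f by blast
    then show ?thesis using that(2) \<open>c = \<sigma> a\<close> by simp
  qed
  then show "z \<in> rhd A F 0" using abcd by (simp add: mem_rhd_0_iff)
qed

lemma rhd_0_subset_R2:
  assumes "conservative A F" "sym (rhd A F 0)"
  shows "rhd A F 0 \<subseteq> R2 A F"
proof
  fix z assume z: "z \<in> rhd A F 0"
  obtain a b c d where "z = ((a, b), (c, d))" by (metis surj_pair)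
  moreover have "(a, b) \<in> A22 A" "(c, d) \<in> A22 A" using z calculation by (simp_all add: rhd_def)
  ultimately have abcd: "z = ((a, b), (c, d))" "(a, b) \<in> A22 A" "(c, d) \<in> A22 A" by blast+
  have zs: "((c, d), (a, b)) \<in> rhd A F 0" using assms(2) z abcd(1) by (blast dest: symD)
  obtain \<sigma> where \<sigma>: "\<sigma> permutes A" "map \<sigma> [a, b] = [c, d]"
    using exists_permutes_map_eq[of "[a, b]" "[c, d]" A] abcd(2,3) by fastforce
  have "app2 f (c, d) = \<sigma> (app2 f (a, b))" if f: "f \<in> F \<inter> ops A 2" for f
  proof (cases "f [a, b] = a")
    case True
    then have "f [c, d] = c" using z f unfolding abcd(1) mem_rhd_0_iff by blast
    then show ?thesis using True \<sigma>(2) by (simp add: app2_def)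
  next
    case False
    then have "f [a, b] = b" using conservative_binary[OF assms(1) f] abcd(2) by auto
    moreover have "f [c, d] \<noteq> c" using zs f False unfolding mem_rhd_0_iff by blast
    then have "f [c, d] = d" using conservative_binary[OF assms(1) f] abcd(3) by auto
    ultimately show ?thesis using \<sigma>(2) by (simp add: app2_def)
  qed
  then show "z \<in> R2 A F"
    using abcd permutes_imp_bij[OF \<sigma>(1)] unfolding R2_def by (auto simp: A22_def)
qed

lemma all_less_2_nat: "(\<forall>i<(2::nat). P i) \<longleftrightarrow> P 0 \<and> P 1"
  by (auto simp: numeral_2_eq_2 less_Suc_eq)

theorem mainTheorem18:
  fixes A :: "'a set" and F :: "('a list \<Rightarrow> 'a) set"
  assumes "clone A F" and "conservative A F" and "symmetric A F"
  shows "rhd A F 0 = rhd A F 1 \<and> rhd A F 1 = R2 A F \<inter> (A22 A \<times> A22 A) \<and>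
    ((\<forall>i<2. \<forall>x\<in>A22 A. \<forall>y\<in>A22 A. (x, y) \<in> rhd A F i) \<or>
     (\<forall>i<2. \<forall>x\<in>A22 A. \<forall>y\<in>A22 A. (x, y) \<in> rhd A F i \<longleftrightarrow> ptyp x y = T0) \<or>
     (\<forall>i<2. \<forall>x\<in>A22 A. \<forall>y\<in>A22 A. (x, y) \<in> rhd A F i \<longleftrightarrow> ptyp x y \<in> {T0, T1}) \<or>
     (card A = 4 \<and> (\<forall>i<2. \<forall>x\<in>A22 A. \<forall>y\<in>A22 A. (x, y) \<in> rhd A F i \<longleftrightarrow> ptyp x y \<in> {T0, T1, T2})) \<or>
     (card A = 3 \<and> (\<forall>i<2. \<forall>x\<in>A22 A. \<forall>y\<in>A22 A. (x, y) \<in> rhd A F i \<longleftrightarrow> ptyp x y \<in> {T0, T01, T10})))"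
proof -
  interpret rhd: typed_pair_preorder A "rhd A F 0"
    using typed_pair_preorder_rhd_0[OF assms] .
  have sym_rhd: "sym (rhd A F 0)" by (rule symI) (rule rhd.sym)
  then have "rhd A F 1 = rhd A F 0"
    using rhd_1_eq_converse[OF assms(2)] by (simp add: sym_conv_converse_eq)
  moreover have "R2 A F \<inter> (A22 A \<times> A22 A) = rhd A F 0"
    using R2_Int_A22_subset_rhd_0[OF assms(1)] rhd_0_subset_R2[OF assms(2) sym_rhd] rhd.subset by blast
  ultimately show ?thesis
    unfolding all_less_2_nat using rhd.classification by simp
qed

end
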